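(* Let $G=(V,E)$ be a simple 2-vertex-connected graph without irrelevant edges and without non-isolating 2-vertex-cuts. Let $(V_1,V_2)$ be a partition of $V$ such that for each $i\in\{1,2\}$, $|V_i|\ge 3$, and if $|V_i|=3$ then $G[V_i]$ is a triangle. Then there is a matching of size $3$ in $G$ consisting of edges each having one endpoint in $V_1$ and one in $V_2$.
   Context: A $k$-vertex-cut is a set of $k$ nodes whose removal disconnects the graph; a graph is 2-vertex-connected if it has at least 3 nodes, is connected and has no 1-vertex-cut. An edge $uv$ is irrelevant if $\{u,v\}$ is a 2-vertex-cut. A 2-vertex-cut $\{u,v\}$ is isolating if $G\setminus\{u,v\}$ has exactly two connected components, one of which consists of a single node; otherwise it is non-isolating. *)

theory Defs
  imports Main
begin

definition simple_graph :: "'a set \<Rightarrow> 'a set set \<Rightarrow> bool" where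
  "simple_graph V E \<longleftrightarrow> finite V \<and> (\<forall>e\<in>E. e \<subseteq> V \<and> card e = 2)"

definition reach_in :: "'a set set \<Rightarrow> 'a set \<Rightarrow> 'a \<Rightarrow> 'a \<Rightarrow> bool" where
  "reach_in E S = (\<lambda>x y. x \<in> S \<and> y \<in> S \<and> {x, y} \<in> E)\<^sup>*\<^sup>*"

definition connected_on :: "'a set set \<Rightarrow> 'a set \<Rightarrow> bool" where
  "connected_on E S \<longleftrightarrow> (\<forall>x\<in>S. \<forall>y\<in>S. reach_in E S x y)"

definition components_on :: "'a set set \<Rightarrow> 'a set \<Rightarrow> 'a set set" where
  "components_on E S = (\<lambda>x. {y\<in>S. reach_in E S x y}) ` S"

definition vertex_cut :: "'a set \<Rightarrow> 'a set set \<Rightarrow> 'a set \<Rightarrow> bool" where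
  "vertex_cut V E X \<longleftrightarrow> X \<subseteq> V \<and> \<not> connected_on E (V - X)"

definition two_vertex_connected :: "'a set \<Rightarrow> 'a set set \<Rightarrow> bool" where
  "two_vertex_connected V E \<longleftrightarrow> card V \<ge> 3 \<and> connected_on E V \<and>
     (\<forall>v\<in>V. \<not> vertex_cut V E {v})"

definition irrelevant_edge :: "'a set \<Rightarrow> 'a set set \<Rightarrow> 'a set \<Rightarrow> bool" where
  "irrelevant_edge V E e \<longleftrightarrow> e \<in> E \<and> vertex_cut V E e"

definition two_vertex_cut :: "'a set \<Rightarrow> 'a set set \<Rightarrow> 'a \<Rightarrow> 'a \<Rightarrow> bool" where
  "two_vertex_cut V E u v \<longleftrightarrow> u \<noteq> v \<and> vertex_cut V E {u, v}"

definition isolating_cut :: "'a set \<Rightarrow> 'a set set \<Rightarrow> 'a \<Rightarrow> 'a \<Rightarrow> bool" where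
  "isolating_cut V E u v \<longleftrightarrow> two_vertex_cut V E u v \<and>
     card (components_on E (V - {u, v})) = 2 \<and>
     (\<exists>C\<in>components_on E (V - {u, v}). card C = 1)"

definition non_isolating_cut :: "'a set \<Rightarrow> 'a set set \<Rightarrow> 'a \<Rightarrow> 'a \<Rightarrow> bool" where
  "non_isolating_cut V E u v \<longleftrightarrow> two_vertex_cut V E u v \<and> \<not> isolating_cut V E u v"

definition is_triangle_on :: "'a set set \<Rightarrow> 'a set \<Rightarrow> bool" where
  "is_triangle_on E S \<longleftrightarrow> card S = 3 \<and> (\<forall>x\<in>S. \<forall>y\<in>S. x \<noteq> y \<longrightarrow> {x, y} \<in> E)"

definition matching :: "'a set set \<Rightarrow> bool" where
  "matching M \<longleftrightarrow> (\<forall>e\<in>M. \<forall>f\<in>M. e \<noteq> f \<longrightarrow> e \<inter> f = {})"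

end

theory Submission
  imports Defs
begin

text \<open>If two vertices \<open>a\<close>, \<open>b\<close> met every edge between \<open>V\<^sub>1\<close> and \<open>V\<^sub>2\<close>, then
  removing them would separate the nonempty sets \<open>V\<^sub>1 - {a, b}\<close> and \<open>V\<^sub>2 - {a, b}\<close>.
  By 2-connectivity \<open>{a, b}\<close> is then a 2-vertex-cut, hence isolating, so one of the two sides
  is a single vertex; that side has exactly three vertices including \<open>a\<close> and \<open>b\<close>, so
  \<open>ab\<close> is an edge of its triangle and thus irrelevant. Hence the bipartite graph of
  \<open>V\<^sub>1\<close>--\<open>V\<^sub>2\<close> edges has no vertex cover of size two, and by the small case of
  K\<ouml>nig's theorem it contains a matching of size three.\<close>

lemma reach_in_stays_in_side:
  assumes "reach_in E (A \<union> B) x y" "x \<in> A"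
    and "\<forall>u\<in>A. \<forall>v\<in>B. {u, v} \<notin> E"
  shows "y \<in> A"
  using assms(1,2) unfolding reach_in_def
proof (induction rule: rtranclp_induct)
  case (step y z)
  then show ?case using assms(3) by blast
qed simp

lemma not_connected_on_if_no_crossing_edges:
  assumes "A \<noteq> {}" "B \<noteq> {}" "A \<inter> B = {}"
    and "\<forall>u\<in>A. \<forall>v\<in>B. {u, v} \<notin> E"
  shows "\<not> connected_on E (A \<union> B)"
proof
  assume "connected_on E (A \<union> B)"
  moreover obtain a b where "a \<in> A" "b \<in> B" using assms(1,2) by blast
  ultimately have "reach_in E (A \<union> B) a b" unfolding connected_on_def by blast
  then have "b \<in> A" using \<open>a \<in> A\<close> assms(4) by (rule reach_in_stays_in_side)
  with \<open>b \<in> B\<close> assms(3) show False by blast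
qed

lemma component_eq_side_if_two_components:
  assumes "x \<in> A" "b \<in> B" "A \<inter> B = {}"
    and no_cross: "\<forall>u\<in>A. \<forall>v\<in>B. {u, v} \<notin> E"
    and two: "card (components_on E (A \<union> B)) = 2"
  shows "{y \<in> A \<union> B. reach_in E (A \<union> B) x y} = A"
proof -
  define comp where "comp z = {y \<in> A \<union> B. reach_in E (A \<union> B) z y}" for z
  have comps: "components_on E (A \<union> B) = comp ` (A \<union> B)"
    unfolding components_on_def comp_def ..
  have self: "z \<in> comp z" if "z \<in> A \<union> B" for z
    using that unfolding comp_def reach_in_def by simp
  have comp_A: "comp z \<subseteq> A" if "z \<in> A" for z
    using reach_in_stays_in_side[OF _ that no_cross] unfolding comp_def by blast
  have "\<forall>u\<in>B. \<forall>v\<in>A. {u, v} \<notin> E" using no_cross by (metis insert_commute)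
  then have comp_B: "comp z \<subseteq> B" if "z \<in> B" for z
    using reach_in_stays_in_side[of E B A z, OF _ that] unfolding comp_def Un_commute[of A B] by blast
  have other: "comp z \<noteq> comp b" if "z \<in> A" for z
    using that self[of z] comp_B[OF \<open>b \<in> B\<close>] \<open>A \<inter> B = {}\<close> by blast
  then have "card {comp x, comp b} = 2" using \<open>x \<in> A\<close> by simp
  moreover have "{comp x, comp b} \<subseteq> components_on E (A \<union> B)"
    using comps \<open>x \<in> A\<close> \<open>b \<in> B\<close> by blast
  moreover have "finite (components_on E (A \<union> B))" using two card_ge_0_finite by force
  ultimately have "components_on E (A \<union> B) = {comp x, comp b}"
    using two by (metis card_subset_eq)
  then have "comp z = comp x" if "z \<in> A" for z
    using comps that other[OF that] by (metis UnI1 image_eqI insertE singletonD)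
  then have "A \<subseteq> comp x" using self by blast
  then show ?thesis using comp_A[OF \<open>x \<in> A\<close>] unfolding comp_def by blast
qed

lemma components_on_eq_sides:
  assumes "A \<noteq> {}" "B \<noteq> {}" "A \<inter> B = {}"
    and no_cross: "\<forall>u\<in>A. \<forall>v\<in>B. {u, v} \<notin> E"
    and two: "card (components_on E (A \<union> B)) = 2"
  shows "components_on E (A \<union> B) = {A, B}"
proof -
  obtain a b where "a \<in> A" "b \<in> B" using assms(1,2) by blast
  have "\<forall>u\<in>B. \<forall>v\<in>A. {u, v} \<notin> E" using no_cross by (metis insert_commute)
  moreover have "B \<inter> A = {}" "card (components_on E (B \<union> A)) = 2"
    using assms(3) two by (auto simp: Un_commute)
  ultimately have "{y \<in> A \<union> B. reach_in E (A \<union> B) x y} = B" if "x \<in> B" for x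
    using component_eq_side_if_two_components[OF that \<open>a \<in> A\<close>] by (simp add: Un_commute)
  moreover have "{y \<in> A \<union> B. reach_in E (A \<union> B) x y} = A" if "x \<in> A" for x
    using component_eq_side_if_two_components[OF that \<open>b \<in> B\<close> assms(3) no_cross two] .
  ultimately show ?thesis
    using assms(1,2) unfolding components_on_def image_Un by auto
qed

lemma connected_on_remove_vertex:
  assumes "two_vertex_connected V E"
  shows "connected_on E (V - {v})"
proof (cases "v \<in> V")
  case True
  then show ?thesis using assms unfolding two_vertex_connected_def vertex_cut_def by blast
next
  case False
  then show ?thesis using assms unfolding two_vertex_connected_def by simp
qed

lemma two_vertex_cut_if_disconnected:
  assumes "two_vertex_connected V E" "\<not> connected_on E (V - {a, b})"
  shows "two_vertex_cut V E a b"
proof -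
  have "a \<noteq> b" using assms connected_on_remove_vertex[of V E a] by auto
  moreover have "{a, b} \<subseteq> V"
  proof (rule ccontr)
    assume "\<not> {a, b} \<subseteq> V"
    then have "V - {a, b} = V - {a} \<or> V - {a, b} = V - {b}" by blast
    then show False using assms connected_on_remove_vertex by metis
  qed
  ultimately show ?thesis using assms(2) unfolding two_vertex_cut_def vertex_cut_def by blast
qed

lemma edge_if_card_Diff_pair_eq_1:
  assumes "finite S" "card S \<ge> 3" "card S = 3 \<longrightarrow> is_triangle_on E S"
    and "card (S - {a, b}) = 1" "a \<noteq> b"
  shows "{a, b} \<in> E"
proof -
  have "card (S - {a, b}) = card S - card (S \<inter> {a, b})"
    using assms(1) by (simp add: card_Diff_subset_Int)
  moreover have "card (S \<inter> {a, b}) \<le> card {a, b}" by (rule card_mono) auto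
  moreover have "card {a, b} = 2" using assms(5) by simp
  ultimately have "card S = 3" "card (S \<inter> {a, b}) = 2" using assms(2,4) by linarith+
  then have "{a, b} \<subseteq> S"
    using assms(5) card_subset_eq[of "{a, b}" "S \<inter> {a, b}"] by auto
  then show ?thesis
    using \<open>card S = 3\<close> assms(3,5) unfolding is_triangle_on_def by blast
qed

lemma Diff_pair_nonempty_if_card_ge_3:
  assumes "card S \<ge> 3"
  shows "S - {a, b} \<noteq> {}"
proof -
  have "card S - card {a, b} \<le> card (S - {a, b})" by (rule diff_card_le_card_Diff) simp
  moreover have "card {a, b} \<le> 2" by (cases "a = b") simp_all
  ultimately have "card (S - {a, b}) > 0" using assms by linarith
  then show ?thesis by (simp add: card_gt_0_iff)
qed

lemma cross_edge_avoiding_pair: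
  assumes "two_vertex_connected V E"
    and no_irrelevant: "\<forall>e\<in>E. \<not> irrelevant_edge V E e"
    and no_non_isolating: "\<forall>u v. \<not> non_isolating_cut V E u v"
    and V: "V1 \<union> V2 = V" "V1 \<inter> V2 = {}"
    and card: "card V1 \<ge> 3" "card V2 \<ge> 3"
    and triangle: "card V1 = 3 \<longrightarrow> is_triangle_on E V1" "card V2 = 3 \<longrightarrow> is_triangle_on E V2"
  shows "\<exists>x y. (x \<in> V1 \<and> y \<in> V2 \<and> {x, y} \<in> E) \<and> x \<notin> {a, b} \<and> y \<notin> {a, b}"
proof (rule ccontr)
  assume no_edge: "\<not> ?thesis"
  define A where "A = V1 - {a, b}"
  define B where "B = V2 - {a, b}"
  have no_cross: "\<forall>u\<in>A. \<forall>v\<in>B. {u, v} \<notin> E"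
    using no_edge unfolding A_def B_def by blast
  have split: "V - {a, b} = A \<union> B" "A \<inter> B = {}"
    using V unfolding A_def B_def by blast+
  have nonempty: "A \<noteq> {}" "B \<noteq> {}"
    unfolding A_def B_def by (intro Diff_pair_nonempty_if_card_ge_3 card)+
  then have "\<not> connected_on E (V - {a, b})"
    using split no_cross by (simp add: not_connected_on_if_no_crossing_edges)
  then have cut: "two_vertex_cut V E a b"
    by (rule two_vertex_cut_if_disconnected[OF assms(1)])
  then have "isolating_cut V E a b"
    using no_non_isolating unfolding non_isolating_cut_def by blast
  then have two: "card (components_on E (A \<union> B)) = 2"
    and singleton: "\<exists>C\<in>components_on E (A \<union> B). card C = 1"
    unfolding isolating_cut_def split(1) by simp_all
  have "components_on E (A \<union> B) = {A, B}"
    by (rule components_on_eq_sides[OF nonempty split(2) no_cross two])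
  then have "card (V1 - {a, b}) = 1 \<or> card (V2 - {a, b}) = 1"
    using singleton unfolding A_def B_def by simp
  moreover have "a \<noteq> b" and cut_ab: "vertex_cut V E {a, b}"
    using cut unfolding two_vertex_cut_def by simp_all
  moreover have "finite V1" "finite V2"
    using card by (simp_all add: card_ge_0_finite)
  ultimately have "{a, b} \<in> E"
    using edge_if_card_Diff_pair_eq_1[of V1 E a b] edge_if_card_Diff_pair_eq_1[of V2 E a b]
      card triangle by argo
  then show False
    using no_irrelevant cut_ab unfolding irrelevant_edge_def by simp
qed

lemma three_disjoint_pairs_if_no_cover_by_two:
  fixes R :: "'a \<Rightarrow> 'a \<Rightarrow> bool"
  assumes no_cover: "\<And>u v. \<exists>x y. R x y \<and> x \<notin> {u, v} \<and> y \<notin> {u, v}"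
  obtains x1 y1 x2 y2 x3 y3 where "R x1 y1" "R x2 y2" "R x3 y3"
    "distinct [x1, x2, x3]" "distinct [y1, y2, y3]"
proof -
  note matched = that
  obtain x1 y1 where first: "R x1 y1" using no_cover by blast
  obtain x2 y2 where second: "R x2 y2" "x2 \<noteq> x1" "y2 \<noteq> y1" using no_cover[of x1 y1] by blast
  show thesis
  proof (cases "\<exists>x y. R x y \<and> x \<notin> {x1, x2} \<and> y \<notin> {y1, y2}")
    case True
    then show thesis using first second matched by auto
  next
    case False
    then have cover: "x \<in> {x1, x2} \<or> y \<in> {y1, y2}" if "R x y" for x y
      using that by blast
    \<comment> \<open>One pair avoiding \<open>{p, p'}\<close> meets \<open>q\<close>, one avoiding \<open>{q, q'}\<close> meets \<open>p'\<close>;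
      a third pair avoiding \<open>q\<close> and \<open>p'\<close> completes them.\<close>
    have crosswise: thesis
      if pq: "R p q" "R p' q'" "{p, p'} = {x1, x2}" "{q, q'} = {y1, y2}" "p \<noteq> p'" "q \<noteq> q'"
        and ab: "R a q" "a \<notin> {p, p'}" "R p' b" "b \<notin> {q, q'}" for p q p' q' a b
    proof -
      obtain c d where cd: "R c d" "c \<notin> {q, p'}" "d \<notin> {q, p'}" using no_cover by blast
      then have "c = p \<or> d = q'" using cover[OF cd(1)] pq(3,4) by auto
      then consider "c = p" "d = q'" | "c = p" "d \<noteq> q'" | "c \<noteq> p" "d = q'" by blast
      then show thesis
      proof cases
        case 1
        then show thesis using matched[of c d a q p' b] pq ab cd by auto
      next
        case 2
        then show thesis using matched[of c d p' q' a q] pq ab cd by auto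
      next
        case 3
        then show thesis using matched[of c d p q p' b] pq ab cd by auto
      qed
    qed
    obtain a ya where a: "R a ya" "a \<notin> {x1, x2}" using no_cover[of x1 x2] by blast
    obtain xb b where b: "R xb b" "b \<notin> {y1, y2}" using no_cover[of y1 y2] by blast
    have "ya \<in> {y1, y2}" "xb \<in> {x1, x2}" using cover a b by blast+
    then consider "ya = y1" "xb = x1" | "ya = y2" "xb = x2" | "ya = y1" "xb = x2" | "ya = y2" "xb = x1"
      by blast
    then show thesis
    proof cases
      case 1
      then show thesis using matched[of a y1 x1 b x2 y2] first second a b by auto
    next
      case 2
      then show thesis using matched[of a y2 x2 b x1 y1] first second a b by auto
    next
      case 3
      then show thesis using crosswise[of x1 y1 x2 y2 a b] first second a b by auto
    next
      case 4
      then show thesis using crosswise[of x2 y2 x1 y1 a b] first second a b by auto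
    qed
  qed
qed

lemma cross_matching_of_three_pairs:
  assumes "V1 \<inter> V2 = {}"
    and "x1 \<in> V1" "x2 \<in> V1" "x3 \<in> V1" "y1 \<in> V2" "y2 \<in> V2" "y3 \<in> V2"
    and "{x1, y1} \<in> E" "{x2, y2} \<in> E" "{x3, y3} \<in> E"
    and "distinct [x1, x2, x3]" "distinct [y1, y2, y3]"
  shows "\<exists>M \<subseteq> E. card M = 3 \<and> matching M \<and> (\<forall>e\<in>M. \<exists>x\<in>V1. \<exists>y\<in>V2. e = {x, y})"
proof (intro exI conjI)
  let ?M = "{{x1, y1}, {x2, y2}, {x3, y3}}"
  have "x \<noteq> y" if "x \<in> V1" "y \<in> V2" for x y using that assms(1) by blast
  then have "{x1, y1} \<inter> {x2, y2} = {}" "{x1, y1} \<inter> {x3, y3} = {}" "{x2, y2} \<inter> {x3, y3} = {}"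
    using assms(2-7,11,12) by auto
  then show "card ?M = 3" and "matching ?M" unfolding matching_def by (auto simp: doubleton_eq_iff)
  show "?M \<subseteq> E" using assms(8-10) by blast
  show "\<forall>e\<in>?M. \<exists>x\<in>V1. \<exists>y\<in>V2. e = {x, y}" using assms(2-7) by blast
qed

theorem lemma3:
  fixes V :: "'a set" and E :: "'a set set" and V1 V2 :: "'a set"
  assumes "simple_graph V E"
    and "two_vertex_connected V E"
    and "\<forall>e\<in>E. \<not> irrelevant_edge V E e"
    and "\<forall>u v. \<not> non_isolating_cut V E u v"
    and "V1 \<union> V2 = V" and "V1 \<inter> V2 = {}"
    and "card V1 \<ge> 3" and "card V2 \<ge> 3"
    and "card V1 = 3 \<longrightarrow> is_triangle_on E V1"
    and "card V2 = 3 \<longrightarrow> is_triangle_on E V2"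
  shows "\<exists>M \<subseteq> E. card M = 3 \<and> matching M \<and>
           (\<forall>e\<in>M. \<exists>x\<in>V1. \<exists>y\<in>V2. e = {x, y})"
proof -
  let ?cross = "\<lambda>x y. x \<in> V1 \<and> y \<in> V2 \<and> {x, y} \<in> E"
  have "\<exists>x y. ?cross x y \<and> x \<notin> {a, b} \<and> y \<notin> {a, b}" for a b
    by (rule cross_edge_avoiding_pair[OF assms(2-10)])
  then obtain x1 y1 x2 y2 x3 y3 where
    pairs: "?cross x1 y1" "?cross x2 y2" "?cross x3 y3"
    and distinct: "distinct [x1, x2, x3]" "distinct [y1, y2, y3]"
    by (rule three_disjoint_pairs_if_no_cover_by_two)
  show ?thesis
    by (rule cross_matching_of_three_pairs[of V1 V2 x1 x2 x3 y1 y2 y3])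
      (use assms(6) pairs distinct in simp_all)
qed

end
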